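(* Let $(\Gamma,d)=(H,\iota,\sigma,m,d)$ be a $\mathbb{Z}/\overline m\mathbb{Z}$-graded Brauer graph and $H'\subseteq H$ stable under $\iota$. Let $\Gamma_d=(H_d,\iota_d,\sigma_d)$ be the Galois covering of $(\Gamma,d)$ and $H'_d=H'\times\mathbb{Z}/\overline m\mathbb{Z}\subseteq H_d$. Then the Galois covering of the graded Brauer graph $\mu^+_{H'}(\Gamma,d)$ is the Brauer graph $\mu^+_{H'_d}(\Gamma_d)$.
   Context: Brauer graph $\Gamma=(H,\iota,\sigma,m)$: $H$ finite, $\iota$ fixed-point-free involution, $\sigma$ a permutation, $m:H\to\mathbb{Z}_{>0}$ constant on $\sigma$-orbits; $\overline m=\mathrm{lcm}\{m(h)\}$. A grading $d:H\to\mathbb{Z}/\overline m\mathbb{Z}$ is admissible if for each $\sigma$-orbit $v$, $\sum_{h\in v}d(h)=\overline m/\widetilde m(v)$ with $\widetilde m(v)$ the value of $m$ on $v$; then $(\Gamma,d)$ is a graded Brauer graph. Its Galois covering is the Brauer graph (multiplicity identically $1$) $\Gamma_d$ with $H_d=H\times\mathbb{Z}/\overline m\mathbb{Z}$ (elements $h_i$), $\iota_d(h_i)=(\iota h)_i$, $\sigma_d(h_i)=(\sigma h)_{i+d(h)}$. Sectors: for $H'$ stable under $\iota$, $(h,r)\in H\times\mathbb{Z}_{\ge0}$ is a sector of elements of $H'$ if $r+1$ is the least $r'\ge0$ with $\sigma^{r'}h\notin H'$, maximal if also $\sigma^{-1}h\notin H'$. Ungraded move: $\mu^+_{(h,r)}(\Gamma)=(H,\iota,\sigma_{(h,r)},m_{(h,r)})$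 with $\sigma_{(h,r)}=(h\ \ \sigma^{r+1}h)\circ\sigma\circ(\sigma^rh\ \ \iota\sigma^{r+1}h)$ (applied right to left), $m_{(h,r)}(\sigma^ih)=m(\iota\sigma^{r+1}h)$ for $0\le i\le r$, $m_{(h,r)}=m$ otherwise. Graded move: $\mu^+_{(h,r)}(\Gamma,d)$ additionally carries $d_{(h,r)}$: $d_{(h,r)}(\iota\sigma^{r+1}h)=-\sum_{i=0}^rd(\sigma^ih)$; $d_{(h,r)}(\sigma^rh)=d(\iota\sigma^{r+1}h)+d(\sigma^rh)$ if $\iota\sigma^{r+1}h\neq\sigma^{-1}h$, else $\sum_{i=-1}^rd(\sigma^ih)+d(\sigma^rh)$; $d_{(h,r)}(\sigma^{-1}h)=\sum_{i=-1}^rd(\sigma^ih)$ if $\iota\sigma^{r+1}h\ne\sigma^{-1}h$, else $-\sum_{i=0}^rd(\sigma^ih)$; $d_{(h,r)}=d$ elsewhere; it is again admissible, with the same $\overline m$. The (graded) generalized Kauer move $\mu^+_{H'}$ is the succession of the (graded) moves of all maximal sectors of elements of $H'$ (independent of order). The Galois covering of $\mu^+_{H'}(\Gamma,d)=(H,\iota,\sigma_{H'},m_{H'},d_{H'})$ is formed with respect to $d_{H'}$. *)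

theory Defs
  imports Main "HOL-Combinatorics.Transposition"
begin

text \<open>A Brauer graph (H, iota, sigma, m). Half-edges live in a type 'a, the finite
  carrier is hes. Functions are only relevant on the carrier.\<close>

record 'a brauer =
  hes  :: "'a set"
  inv  :: "'a \<Rightarrow> 'a"
  perm :: "'a \<Rightarrow> 'a"
  mult :: "'a \<Rightarrow> nat"

definition brauer_graph :: "'a brauer \<Rightarrow> bool" where
  "brauer_graph G \<longleftrightarrow>
     finite (hes G) \<and>
     (\<forall>h\<in>hes G. inv G h \<in> hes G \<and> inv G h \<noteq> h \<and> inv G (inv G h) = h) \<and>
     bij_betw (perm G) (hes G) (hes G) \<and>
     (\<forall>h\<in>hes G. mult G h > 0 \<and> mult G (perm G h) = mult G h)"

definition mbar :: "'a brauer \<Rightarrow> nat" where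
  "mbar G = Lcm (mult G ` hes G)"

definition sorbit :: "'a brauer \<Rightarrow> 'a \<Rightarrow> 'a set" where
  "sorbit G h = {(perm G ^^ k) h | k. True}"

definition perm_inv :: "'a brauer \<Rightarrow> 'a \<Rightarrow> 'a" where
  "perm_inv G h = inv_into (hes G) (perm G) h"

text \<open>A grading d : H -> Z/(mbar)Z is represented by integer representatives;
  admissibility: for each sigma-orbit v, sum of d over v = mbar / m(v) modulo mbar.\<close>
definition admissible :: "'a brauer \<Rightarrow> ('a \<Rightarrow> int) \<Rightarrow> bool" where
  "admissible G d \<longleftrightarrow>
     (\<forall>h\<in>hes G. (\<Sum>x\<in>sorbit G h. d x) mod int (mbar G)
                 = int (mbar G div mult G h) mod int (mbar G))"

definition graded_brauer_graph :: "'a brauer \<Rightarrow> ('a \<Rightarrow> int) \<Rightarrow> bool" where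
  "graded_brauer_graph G d \<longleftrightarrow> brauer_graph G \<and> admissible G d"

text \<open>Galois covering: H_d = H x Z/mbar Z (representatives 0..mbar-1),
  iota_d(h_i) = (iota h)_i, sigma_d(h_i) = (sigma h)_{i + d h}, multiplicity 1.\<close>
definition covering :: "'a brauer \<Rightarrow> ('a \<Rightarrow> int) \<Rightarrow> ('a \<times> int) brauer" where
  "covering G d =
     \<lparr> hes = hes G \<times> {0..<int (mbar G)},
       inv = (\<lambda>(h, i). (inv G h, i)),
       perm = (\<lambda>(h, i). (perm G h, (i + d h) mod int (mbar G))),
       mult = (\<lambda>_. 1) \<rparr>"

definition iota_stable :: "'a brauer \<Rightarrow> 'a set \<Rightarrow> bool" where
  "iota_stable G H' \<longleftrightarrow> H' \<subseteq> hes G \<and> (\<forall>h\<in>H'. inv G h \<in> H')"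

definition is_sector :: "'a brauer \<Rightarrow> 'a set \<Rightarrow> 'a \<Rightarrow> nat \<Rightarrow> bool" where
  "is_sector G H' h r \<longleftrightarrow>
     h \<in> hes G \<and> (\<forall>i\<le>r. (perm G ^^ i) h \<in> H') \<and> (perm G ^^ (Suc r)) h \<notin> H'"

definition max_sector :: "'a brauer \<Rightarrow> 'a set \<Rightarrow> 'a \<Rightarrow> nat \<Rightarrow> bool" where
  "max_sector G H' h r \<longleftrightarrow> is_sector G H' h r \<and> perm_inv G h \<notin> H'"

definition max_sectors :: "'a brauer \<Rightarrow> 'a set \<Rightarrow> ('a \<times> nat) set" where
  "max_sectors G H' = {(h, r). max_sector G H' h r}"

definition move :: "'a brauer \<Rightarrow> 'a \<Rightarrow> nat \<Rightarrow> 'a brauer" where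
  "move G h r =
     (let s = perm G; t = inv G (((s ^^ Suc r)) h) in
      G\<lparr> perm := transpose h ((s ^^ Suc r) h) \<circ> s \<circ> transpose ((s ^^ r) h) t,
         mult := (\<lambda>x. if x \<in> {(s ^^ i) h | i. i \<le> r} then mult G t else mult G x) \<rparr>)"

definition move_grading :: "'a brauer \<Rightarrow> ('a \<Rightarrow> int) \<Rightarrow> 'a \<Rightarrow> nat \<Rightarrow> ('a \<Rightarrow> int)" where
  "move_grading G d h r =
     (let s = perm G; t = inv G ((s ^^ Suc r) h); p = perm_inv G h;
          S0 = (\<Sum>i\<le>r. d ((s ^^ i) h));
          S1 = d p + S0 in
      (\<lambda>x. if x = t then - S0
           else if x = (s ^^ r) h then
             (if t \<noteq> p then d t + d ((s ^^ r) h) else S1 + d ((s ^^ r) h))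
           else if x = p then (if t \<noteq> p then S1 else - S0)
           else d x))"

definition gmove :: "'a brauer \<times> ('a \<Rightarrow> int) \<Rightarrow> 'a \<times> nat \<Rightarrow> 'a brauer \<times> ('a \<Rightarrow> int)" where
  "gmove Gd hr = (move (fst Gd) (fst hr) (snd hr), move_grading (fst Gd) (snd Gd) (fst hr) (snd hr))"

fun moves :: "'a brauer \<Rightarrow> ('a \<times> nat) list \<Rightarrow> 'a brauer" where
  "moves G [] = G"
| "moves G ((h, r) # xs) = moves (move G h r) xs"

fun gmoves :: "'a brauer \<times> ('a \<Rightarrow> int) \<Rightarrow> ('a \<times> nat) list \<Rightarrow> 'a brauer \<times> ('a \<Rightarrow> int)" where
  "gmoves Gd [] = Gd"
| "gmoves Gd (hr # xs) = gmoves (gmove Gd hr) xs"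

definition brauer_eq :: "'a brauer \<Rightarrow> 'a brauer \<Rightarrow> bool" where
  "brauer_eq G1 G2 \<longleftrightarrow> hes G1 = hes G2 \<and>
     (\<forall>x\<in>hes G1. inv G1 x = inv G2 x \<and> perm G1 x = perm G2 x \<and> mult G1 x = mult G2 x)"

end

theory Submission
  imports Defs
begin

text \<open>The moves of a family of sectors whose exits, mates and start predecessors all lie
  outside the family commute, and their composite has a closed form (\<open>kauer_perm\<close>): the mate
  \<open>\<iota> \<sigma>\<^sup>r\<^sup>+\<^sup>1 h\<close> of a sector \<open>(h, r)\<close> goes to \<open>h\<close>, its last element \<open>\<sigma>\<^sup>r h\<close> goes to the
  successor of the mate, and whatever now points at a sector start jumps to its exit.
  Maximal sectors of an \<open>\<iota>\<close>-stable set form such a family, and the maximal sectors of \<open>H'\<^sub>d\<close>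
  are exactly the lifts \<open>(h\<^sub>j, r)\<close> of those of \<open>H'\<close>. By induction along the list of sectors it
  therefore suffices to compare one graded move with the moves of all lifts of the same sector;
  evaluating both closed forms, the grading of the graded move is exactly the index shift
  produced in the covering. The moves do not change \<open>mbar\<close>, since each sector shares its
  multiplicity with its exit, which no move touches.\<close>

text \<open>The structure the moves act on; unlike \<open>brauer_graph\<close>, it is evidently preserved by a
  single move.\<close>

locale brauer_skeleton =
  fixes G :: "'a brauer"
  assumes perm_bij: "bij_betw (perm G) (hes G) (hes G)"
    and inv_hes: "x \<in> hes G \<Longrightarrow> inv G x \<in> hes G"
    and inv_inv: "x \<in> hes G \<Longrightarrow> inv G (inv G x) = x"
begin

lemma perm_hes: "x \<in> hes G \<Longrightarrow> perm G x \<in> hes G"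
  using perm_bij by (auto simp: bij_betw_def)

lemma perm_eq_iff: "x \<in> hes G \<Longrightarrow> y \<in> hes G \<Longrightarrow> perm G x = perm G y \<longleftrightarrow> x = y"
  using perm_bij by (auto simp: bij_betw_def inj_on_def)

lemma funpow_hes: "x \<in> hes G \<Longrightarrow> (perm G ^^ i) x \<in> hes G"
  by (induction i) (auto simp: perm_hes)

lemma funpow_eq_iff:
  "x \<in> hes G \<Longrightarrow> y \<in> hes G \<Longrightarrow> (perm G ^^ i) x = (perm G ^^ i) y \<longleftrightarrow> x = y"
  by (induction i) (auto simp: perm_eq_iff funpow_hes)

lemma perm_inv_hes: "h \<in> hes G \<Longrightarrow> perm_inv G h \<in> hes G"
  using perm_bij by (simp add: perm_inv_def bij_betw_def inv_into_into)

lemma perm_perm_inv: "h \<in> hes G \<Longrightarrow> perm G (perm_inv G h) = h"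
  using perm_bij by (simp add: perm_inv_def bij_betw_def f_inv_into_f)

lemma perm_inv_eqI: "x \<in> hes G \<Longrightarrow> perm G x = h \<Longrightarrow> perm_inv G h = x"
  using perm_bij by (auto simp: perm_inv_def bij_betw_def inv_into_f_f)

end

lemma brauer_graph_skeleton: "brauer_graph G \<Longrightarrow> brauer_skeleton G"
  unfolding brauer_graph_def brauer_skeleton_def by blast

definition sector_set :: "'a brauer \<Rightarrow> 'a \<times> nat \<Rightarrow> 'a set" where
  "sector_set G k = {(perm G ^^ i) (fst k) | i. i \<le> snd k}"

definition sector_last :: "'a brauer \<Rightarrow> 'a \<times> nat \<Rightarrow> 'a" where
  "sector_last G k = (perm G ^^ snd k) (fst k)"

definition sector_exit :: "'a brauer \<Rightarrow> 'a \<times> nat \<Rightarrow> 'a" where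
  "sector_exit G k = (perm G ^^ Suc (snd k)) (fst k)"

definition sector_mate :: "'a brauer \<Rightarrow> 'a \<times> nat \<Rightarrow> 'a" where
  "sector_mate G k = inv G (sector_exit G k)"

lemma perm_sector_last: "perm G (sector_last G k) = sector_exit G k"
  by (simp add: sector_last_def sector_exit_def)

lemma (in brauer_skeleton) sector_last_hes: "fst k \<in> hes G \<Longrightarrow> sector_last G k \<in> hes G"
  and sector_exit_hes: "fst k \<in> hes G \<Longrightarrow> sector_exit G k \<in> hes G"
  and sector_mate_hes: "fst k \<in> hes G \<Longrightarrow> sector_mate G k \<in> hes G"
  by (simp_all add: sector_last_def sector_exit_def sector_mate_def inv_hes funpow_hes
      del: funpow.simps)

definition isolated_sector :: "'a brauer \<Rightarrow> 'a set \<Rightarrow> 'a \<times> nat \<Rightarrow> bool" where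
  "isolated_sector G B k \<longleftrightarrow> fst k \<in> hes G \<and> sector_set G k \<subseteq> B \<and>
     sector_exit G k \<notin> B \<and> sector_mate G k \<notin> B \<and> (\<forall>x\<in>hes G. perm G x = fst k \<longrightarrow> x \<notin> B)"

locale isolated_family = brauer_skeleton +
  fixes B :: "'a set" and S :: "('a \<times> nat) set"
  assumes isolated: "k \<in> S \<Longrightarrow> isolated_sector G B k"
begin

lemma subfamily: "S' \<subseteq> S \<Longrightarrow> isolated_family G B S'"
  using isolated by unfold_locales auto

lemma start_hes: "k \<in> S \<Longrightarrow> fst k \<in> hes G"
  using isolated by (simp add: isolated_sector_def)

lemma sector_set_subset: "k \<in> S \<Longrightarrow> sector_set G k \<subseteq> B"
  using isolated by (simp add: isolated_sector_def)

lemma funpow_mem: "k \<in> S \<Longrightarrow> i \<le> snd k \<Longrightarrow> (perm G ^^ i) (fst k) \<in> B"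
  using isolated[of k] by (auto simp: isolated_sector_def sector_set_def)

lemma start_mem: "k \<in> S \<Longrightarrow> fst k \<in> B"
  using funpow_mem[of k 0] by simp

lemma last_mem: "k \<in> S \<Longrightarrow> sector_last G k \<in> B"
  by (simp add: sector_last_def funpow_mem)

lemma exit_notin: "k \<in> S \<Longrightarrow> sector_exit G k \<notin> B"
  and mate_notin: "k \<in> S \<Longrightarrow> sector_mate G k \<notin> B"
  and pred_notin: "k \<in> S \<Longrightarrow> x \<in> hes G \<Longrightarrow> perm G x = fst k \<Longrightarrow> x \<notin> B"
  using isolated by (auto simp: isolated_sector_def)

lemma last_hes: "k \<in> S \<Longrightarrow> sector_last G k \<in> hes G"
  and exit_hes: "k \<in> S \<Longrightarrow> sector_exit G k \<in> hes G"
  and mate_hes: "k \<in> S \<Longrightarrow> sector_mate G k \<in> hes G"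
  by (simp_all add: sector_last_hes sector_exit_hes sector_mate_hes start_hes)

lemma funpow_sector_eq:
  assumes "k \<in> S" "k' \<in> S" "i \<le> snd k" "j \<le> snd k'"
    and "(perm G ^^ i) (fst k) = (perm G ^^ j) (fst k')"
  shows "k = k' \<and> i = j"
proof -
  have "k = k' \<and> i = j"
    if k: "k \<in> S" and k': "k' \<in> S" and i: "i \<le> snd k" and j: "j \<le> snd k'" and "i \<le> j"
      and eq: "(perm G ^^ i) (fst k) = (perm G ^^ j) (fst k')" for k k' i j
  proof -
    have "i = j"
    proof (rule ccontr)
      assume "i \<noteq> j"
      then obtain m where m: "j = i + Suc m"
        using \<open>i \<le> j\<close> by (metis le_iff_add not0_implies_Suc add_0_right)
      have "(perm G ^^ i) (fst k) = (perm G ^^ i) (perm G ((perm G ^^ m) (fst k')))"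
        using eq by (simp add: m funpow_add funpow_swap1)
      then have "perm G ((perm G ^^ m) (fst k')) = fst k"
        using funpow_eq_iff start_hes k k' perm_hes funpow_hes by metis
      moreover have "(perm G ^^ m) (fst k') \<in> B" using funpow_mem k' j m by simp
      ultimately show False using pred_notin k funpow_hes start_hes k' by blast
    qed
    moreover have "fst k = fst k'"
      using eq funpow_eq_iff start_hes k k' \<open>i = j\<close> by blast
    moreover have "snd k = snd k'"
    proof -
      have False if "l \<in> S" "l' \<in> S" "fst l = fst l'" "snd l < snd l'" for l l'
        using that exit_notin[of l] funpow_mem[of l' "Suc (snd l)"]
        by (simp add: sector_exit_def del: funpow.simps)
      then show ?thesis using k k' \<open>fst k = fst k'\<close> by (metis linorder_neqE_nat)
    qed
    ultimately show ?thesis by (simp add: prod_eq_iff)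
  qed
  then show ?thesis using assms by (metis nat_le_linear)
qed

lemma start_inj: "k \<in> S \<Longrightarrow> k' \<in> S \<Longrightarrow> fst k = fst k' \<Longrightarrow> k = k'"
  using funpow_sector_eq[of k k' 0 0] by simp

lemma last_inj: "k \<in> S \<Longrightarrow> k' \<in> S \<Longrightarrow> sector_last G k = sector_last G k' \<Longrightarrow> k = k'"
  using funpow_sector_eq[of k k' "snd k" "snd k'"] by (simp add: sector_last_def)

lemma exit_inj: "k \<in> S \<Longrightarrow> k' \<in> S \<Longrightarrow> sector_exit G k = sector_exit G k' \<Longrightarrow> k = k'"
  by (metis perm_sector_last perm_eq_iff last_hes last_inj)

lemma mate_inj: "k \<in> S \<Longrightarrow> k' \<in> S \<Longrightarrow> sector_mate G k = sector_mate G k' \<Longrightarrow> k = k'"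
  by (metis sector_mate_def inv_inv exit_hes exit_inj)

end

definition sector_jump :: "'a brauer \<Rightarrow> ('a \<times> nat) set \<Rightarrow> 'a \<Rightarrow> 'a" where
  "sector_jump G S y =
     (if \<exists>k\<in>S. y = fst k then sector_exit G (SOME k. k \<in> S \<and> y = fst k) else y)"

text \<open>The permutation obtained by performing the moves of all sectors in \<open>S\<close>, in any order.\<close>

definition kauer_perm :: "'a brauer \<Rightarrow> ('a \<times> nat) set \<Rightarrow> 'a \<Rightarrow> 'a" where
  "kauer_perm G S x =
     (if \<exists>k\<in>S. x = sector_mate G k then fst (SOME k. k \<in> S \<and> x = sector_mate G k)
      else sector_jump G S (perm G (if \<exists>k\<in>S. x = sector_last G k
        then sector_mate G (SOME k. k \<in> S \<and> x = sector_last G k) else x)))"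

lemma sector_jump_other: "(\<And>k. k \<in> S \<Longrightarrow> y \<noteq> fst k) \<Longrightarrow> sector_jump G S y = y"
  unfolding sector_jump_def by auto

lemma kauer_perm_other:
  "(\<And>k. k \<in> S \<Longrightarrow> x \<noteq> sector_mate G k \<and> x \<noteq> sector_last G k) \<Longrightarrow>
    kauer_perm G S x = sector_jump G S (perm G x)"
  unfolding kauer_perm_def by auto

context isolated_family
begin

lemma sector_jump_start: "k \<in> S \<Longrightarrow> sector_jump G S (fst k) = sector_exit G k"
  unfolding sector_jump_def
  by (metis (mono_tags, lifting) some_equality start_inj)

lemma kauer_perm_mate:
  assumes k: "k \<in> S"
  shows "kauer_perm G S (sector_mate G k) = fst k"
proof -
  have "(SOME k'. k' \<in> S \<and> sector_mate G k = sector_mate G k') = k"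
    using k by (metis (mono_tags, lifting) some_equality mate_inj)
  then show ?thesis using k unfolding kauer_perm_def by auto
qed

lemma kauer_perm_last:
  assumes k: "k \<in> S"
  shows "kauer_perm G S (sector_last G k) = sector_jump G S (perm G (sector_mate G k))"
proof -
  have "\<not> (\<exists>k'\<in>S. sector_last G k = sector_mate G k')"
    using last_mem[OF k] mate_notin by metis
  moreover have "(SOME k'. k' \<in> S \<and> sector_last G k = sector_last G k') = k"
    using k by (metis (mono_tags, lifting) some_equality last_inj)
  ultimately show ?thesis using k unfolding kauer_perm_def by auto
qed

lemma transpose_sector_jump:
  assumes k: "k \<in> S" and y: "y \<noteq> sector_exit G k"
  shows "transpose (fst k) (sector_exit G k) (sector_jump G (S - {k}) y) = sector_jump G S y"
proof -
  interpret S0: isolated_family G B "S - {k}" by (rule subfamily) auto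
  show ?thesis
  proof (cases "\<exists>k'\<in>S - {k}. y = fst k'")
    case True
    then obtain k' where k': "k' \<in> S" "k' \<noteq> k" and y: "y = fst k'" by blast
    have "sector_exit G k' \<noteq> fst k" using exit_notin[OF k'(1)] start_mem[OF k] by metis
    moreover have "sector_exit G k' \<noteq> sector_exit G k" using exit_inj k k' by metis
    ultimately show ?thesis
      using k' y S0.sector_jump_start[of k'] sector_jump_start[of k'] by simp
  next
    case False
    then have "sector_jump G (S - {k}) y = y" by (auto intro: sector_jump_other)
    moreover have "sector_jump G S y = y" if "y \<noteq> fst k"
      using False that by (auto intro: sector_jump_other)
    ultimately show ?thesis using y sector_jump_start[OF k] by (cases "y = fst k") auto
  qed
qed

lemma kauer_perm_remove_other:
  assumes k: "k \<in> S" and x: "x \<in> hes G"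
    and not_mate: "x \<noteq> sector_mate G k" and not_last: "x \<noteq> sector_last G k"
  shows "transpose (fst k) (sector_exit G k) (kauer_perm G (S - {k}) x) = kauer_perm G S x"
proof -
  interpret S0: isolated_family G B "S - {k}" by (rule subfamily) auto
  consider (mate) k' where "k' \<in> S - {k}" "x = sector_mate G k'"
    | (last) k' where "k' \<in> S - {k}" "x = sector_last G k'"
    | (neither) "\<And>k'. k' \<in> S \<Longrightarrow> x \<noteq> sector_mate G k' \<and> x \<noteq> sector_last G k'"
    using not_mate not_last by blast
  then show ?thesis
  proof cases
    case mate
    have "fst k' \<noteq> fst k" using start_inj[of k' k] mate(1) k by auto
    moreover have "fst k' \<noteq> sector_exit G k" using start_mem[of k'] exit_notin[OF k] mate(1) by auto
    ultimately show ?thesis using mate S0.kauer_perm_mate kauer_perm_mate by simp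
  next
    case last
    have "sector_mate G k' \<noteq> sector_last G k" using mate_notin[of k'] last_mem[OF k] last(1) by auto
    then have "perm G (sector_mate G k') \<noteq> sector_exit G k"
      using perm_eq_iff mate_hes[of k'] last_hes[OF k] last(1) by (auto simp flip: perm_sector_last)
    then show ?thesis
      using last S0.kauer_perm_last kauer_perm_last transpose_sector_jump[OF k] by simp
  next
    case neither
    have "perm G x \<noteq> sector_exit G k"
      using perm_eq_iff[OF x last_hes[OF k]] not_last by (simp flip: perm_sector_last)
    moreover have "kauer_perm G (S - {k}) x = sector_jump G (S - {k}) (perm G x)"
      using neither by (intro kauer_perm_other) auto
    ultimately show ?thesis
      using neither kauer_perm_other[of S x G] transpose_sector_jump[OF k] by simp
  qed
qed

lemma kauer_perm_remove:
  assumes k: "k \<in> S" and x: "x \<in> hes G"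
  shows "transpose (fst k) (sector_exit G k)
           (kauer_perm G (S - {k}) (transpose (sector_last G k) (sector_mate G k) x)) =
         kauer_perm G S x"
proof -
  have last_mate: "sector_last G k \<noteq> sector_mate G k" using last_mem[OF k] mate_notin[OF k] by auto
  consider "x = sector_mate G k" | "x = sector_last G k"
    | "x \<noteq> sector_mate G k" "x \<noteq> sector_last G k"
    by blast
  then show ?thesis
  proof cases
    case 1
    have "kauer_perm G (S - {k}) (sector_last G k) = sector_jump G (S - {k}) (sector_exit G k)"
      using last_mem[OF k] mate_notin last_inj[OF k]
      by (subst kauer_perm_other) (auto simp: perm_sector_last)
    also have "\<dots> = sector_exit G k"
      using exit_notin[OF k] start_mem by (intro sector_jump_other) auto
    finally show ?thesis using 1 last_mate kauer_perm_mate[OF k] by simp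
  next
    case 2
    have "kauer_perm G (S - {k}) (sector_mate G k) =
        sector_jump G (S - {k}) (perm G (sector_mate G k))"
      using mate_notin[OF k] last_mem mate_inj[OF k] by (intro kauer_perm_other) auto
    moreover have "perm G (sector_mate G k) \<noteq> sector_exit G k"
      using perm_eq_iff[OF mate_hes[OF k] last_hes[OF k]] last_mate by (simp flip: perm_sector_last)
    ultimately show ?thesis
      using 2 last_mate transpose_sector_jump[OF k] kauer_perm_last[OF k] by simp
  next
    case 3
    then show ?thesis using kauer_perm_remove_other[OF k x] by simp
  qed
qed

lemma funpow_sector_unaffected:
  assumes k: "k \<in> S" and s: "\<And>x. x \<in> hes G \<Longrightarrow> s x = kauer_perm G (S - {k}) x"
  shows "i \<le> Suc (snd k) \<Longrightarrow> (s ^^ i) (fst k) = (perm G ^^ i) (fst k)"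
proof (induction i)
  case 0
  then show ?case by simp
next
  case (Suc i)
  define y where "y = (perm G ^^ i) (fst k)"
  have i: "i \<le> snd k" using Suc.prems by simp
  have "y \<in> B" unfolding y_def using funpow_mem[OF k i] .
  have not_last: "y \<noteq> sector_last G k'" if "k' \<in> S - {k}" for k'
    using funpow_sector_eq[OF k _ i, of k' "snd k'"] that by (auto simp: y_def sector_last_def)
  have not_start: "perm G y \<noteq> fst k'" if "k' \<in> S - {k}" for k'
  proof (cases "Suc i \<le> snd k")
    case True
    then show ?thesis using funpow_sector_eq[OF k _ True, of k' 0] that by (auto simp: y_def)
  next
    case False
    then have "i = snd k" using i by simp
    then have "perm G y = sector_exit G k" by (simp add: y_def sector_exit_def)
    then show ?thesis using exit_notin[OF k] start_mem[of k'] that by auto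
  qed
  have "(s ^^ Suc i) (fst k) = kauer_perm G (S - {k}) y"
    using Suc funpow_hes[OF start_hes[OF k]] s by (simp add: y_def)
  also have "\<dots> = sector_jump G (S - {k}) (perm G y)"
    using \<open>y \<in> B\<close> mate_notin not_last by (intro kauer_perm_other) auto
  also have "\<dots> = perm G y"
    using not_start by (intro sector_jump_other) auto
  finally show ?case by (simp add: y_def)
qed

end

lemma move_hes [simp]: "hes (move G h r) = hes G"
  and move_inv [simp]: "inv (move G h r) = inv G"
  and perm_move: "perm (move G h r) = transpose h (sector_exit G (h, r)) \<circ> perm G \<circ>
      transpose (sector_last G (h, r)) (sector_mate G (h, r))"
  and mult_move: "mult (move G h r) x = (if x \<in> sector_set G (h, r)
      then mult G (sector_mate G (h, r)) else mult G x)"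
  unfolding move_def Let_def sector_exit_def sector_last_def sector_mate_def sector_set_def
  by auto

lemma moves_append: "moves G (xs @ ys) = moves (moves G xs) ys"
  by (induction G xs rule: moves.induct) auto

lemma moves_snoc: "moves G (xs @ [k]) = move (moves G xs) (fst k) (snd k)"
  by (cases k) (simp add: moves_append)

lemma moves_hes [simp]: "hes (moves G xs) = hes G"
  and moves_inv [simp]: "inv (moves G xs) = inv G"
  by (induction G xs rule: moves.induct) auto

lemma moves_kauer_perm:
  assumes "isolated_family G B (set xs)" and "distinct xs" and "x \<in> hes G"
  shows "perm (moves G xs) x = kauer_perm G (set xs) x"
  using assms
proof (induction xs arbitrary: x rule: rev_induct)
  case Nil
  then show ?case by (simp add: kauer_perm_def sector_jump_def)
next
  case (snoc k xs)
  interpret isolated_family G B "set (xs @ [k])" by fact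
  have k: "k \<in> set (xs @ [k])" and rest: "set (xs @ [k]) - {k} = set xs"
    using snoc.prems(2) by auto
  have IH: "perm (moves G xs) y = kauer_perm G (set (xs @ [k]) - {k}) y" if "y \<in> hes G" for y
    using snoc.IH[OF subfamily _ that] snoc.prems(2) rest by auto
  note unaffected = funpow_sector_unaffected[OF k IH]
  have "sector_exit (moves G xs) k = sector_exit G k"
    using unaffected[of "Suc (snd k)"] by (simp add: sector_exit_def del: funpow.simps)
  moreover have "sector_last (moves G xs) k = sector_last G k"
    using unaffected[of "snd k"] by (simp add: sector_last_def)
  ultimately have "perm (moves G (xs @ [k])) = transpose (fst k) (sector_exit G k) \<circ>
      perm (moves G xs) \<circ> transpose (sector_last G k) (sector_mate G k)"
    by (simp add: moves_snoc perm_move sector_mate_def)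
  moreover have "transpose (sector_last G k) (sector_mate G k) x \<in> hes G"
    using last_hes[OF k] mate_hes[OF k] snoc.prems(3) by (simp add: transpose_def)
  ultimately show ?case
    using IH kauer_perm_remove[OF k snoc.prems(3)] rest by simp
qed

lemma moves_funpow_sector:
  assumes "isolated_family G B (set (xs @ [k]))" and "distinct (xs @ [k])"
    and "i \<le> Suc (snd k)"
  shows "(perm (moves G xs) ^^ i) (fst k) = (perm G ^^ i) (fst k)"
proof -
  interpret isolated_family G B "set (xs @ [k])" by fact
  have rest: "set (xs @ [k]) - {k} = set xs" using assms(2) by auto
  have "perm (moves G xs) x = kauer_perm G (set (xs @ [k]) - {k}) x" if "x \<in> hes G" for x
    using moves_kauer_perm[OF subfamily _ that] assms(2) rest by auto
  from funpow_sector_unaffected[OF _ this assms(3)] show ?thesis by simp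
qed

lemma
  assumes "isolated_family G B (set (xs @ [k]))" and "distinct (xs @ [k])"
  shows moves_sector_set: "sector_set (moves G xs) k = sector_set G k"
    and moves_sector_exit: "sector_exit (moves G xs) k = sector_exit G k"
    and moves_sector_mate: "sector_mate (moves G xs) k = sector_mate G k"
proof -
  note unaffected = moves_funpow_sector[OF assms]
  show "sector_set (moves G xs) k = sector_set G k"
    unfolding sector_set_def using unaffected by (metis le_SucI)
  show exit: "sector_exit (moves G xs) k = sector_exit G k"
    unfolding sector_exit_def using unaffected[of "Suc (snd k)"] by simp
  show "sector_mate (moves G xs) k = sector_mate G k"
    unfolding sector_mate_def exit by simp
qed

text \<open>After the other moves, the predecessor of \<open>fst k\<close> may be the last element of a moved
  sector, which lies in \<open>B\<close>; isolation survives only relative to the sector itself.\<close>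

lemma isolated_sector_moves:
  assumes F: "isolated_family G B (set (xs @ [k]))" and dist: "distinct (xs @ [k])"
  shows "isolated_sector (moves G xs) (sector_set G k) k"
proof -
  interpret isolated_family G B "set (xs @ [k])" by fact
  have k: "k \<in> set (xs @ [k])" by simp
  note unaffected = moves_funpow_sector[OF F dist]
  have "x \<notin> sector_set G k" if "perm (moves G xs) x = fst k" for x
  proof
    assume "x \<in> sector_set G k"
    then obtain i where i: "i \<le> snd k" "x = (perm G ^^ i) (fst k)" by (auto simp: sector_set_def)
    then have "(perm G ^^ Suc i) (fst k) = (perm G ^^ 0) (fst k)"
      using that unaffected[of i] unaffected[of "Suc i"] by simp
    then show False
    proof (cases "Suc i \<le> snd k")
      case True
      then show False using funpow_sector_eq[OF k k True, of 0] \<open>(perm G ^^ Suc i) _ = _\<close> by simp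
    next
      case False
      then have "i = snd k" using i by simp
      then have "sector_exit G k = fst k"
        using \<open>(perm G ^^ Suc i) _ = _\<close> by (simp add: sector_exit_def)
      then show False using exit_notin[OF k] start_mem[OF k] by simp
    qed
  qed
  then show ?thesis
    using start_hes[OF k] sector_set_subset[OF k] exit_notin[OF k] mate_notin[OF k]
      moves_sector_set[OF F dist] moves_sector_exit[OF F dist] moves_sector_mate[OF F dist]
    by (auto simp: isolated_sector_def)
qed

lemma moves_mult_mem:
  assumes "isolated_family G B (set xs)" and "distinct xs" and "x \<in> hes G"
  shows "mult (moves G xs) x \<in> mult G ` hes G"
  using assms
proof (induction xs arbitrary: x rule: rev_induct)
  case Nil
  then show ?case by simp
next
  case (snoc k xs)
  interpret isolated_family G B "set (xs @ [k])" by fact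
  have IH: "mult (moves G xs) y \<in> mult G ` hes G" if "y \<in> hes G" for y
    using snoc.IH[OF subfamily _ that] snoc.prems(2) by auto
  show ?case
    using IH[OF snoc.prems(3)] IH[OF mate_hes[of k]]
      moves_sector_set[OF snoc.prems(1,2)] moves_sector_mate[OF snoc.prems(1,2)]
    by (simp add: moves_snoc mult_move)
qed

lemma moves_mult_outside:
  assumes "isolated_family G B (set xs)" and "distinct xs"
    and "x \<notin> (\<Union>k\<in>set xs. sector_set G k)"
  shows "mult (moves G xs) x = mult G x"
  using assms
proof (induction xs rule: rev_induct)
  case Nil
  then show ?case by simp
next
  case (snoc k xs)
  interpret isolated_family G B "set (xs @ [k])" by fact
  have "mult (moves G xs) x = mult G x"
    using snoc.IH[OF subfamily] snoc.prems by auto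
  then show ?case
    using snoc.prems(3) moves_sector_set[OF snoc.prems(1,2)] by (simp add: moves_snoc mult_move)
qed

lemma mult_funpow: "brauer_graph G \<Longrightarrow> h \<in> hes G \<Longrightarrow> mult G ((perm G ^^ i) h) = mult G h"
  by (induction i) (simp_all add: brauer_graph_def brauer_skeleton.funpow_hes brauer_graph_skeleton)

lemma moves_mbar:
  assumes G: "brauer_graph G" and F: "isolated_family G B (set xs)" and "distinct xs"
  shows "mbar (moves G xs) = mbar G"
proof -
  interpret isolated_family G B "set xs" by fact
  let ?U = "\<Union>k\<in>set xs. sector_set G k"
  have "\<exists>z\<in>hes G - ?U. mult G z = mult G y" if y: "y \<in> hes G" for y
  proof (cases "y \<in> ?U")
    case True
    then obtain k i where k: "k \<in> set xs" "i \<le> snd k" "y = (perm G ^^ i) (fst k)"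
      by (auto simp: sector_set_def)
    have "mult G y = mult G (sector_exit G k)"
      using mult_funpow[OF G start_hes[OF k(1)]] k(3)
      by (simp add: sector_exit_def del: funpow.simps)
    moreover have "sector_exit G k \<notin> ?U" using exit_notin[OF k(1)] sector_set_subset by blast
    ultimately show ?thesis using exit_hes[OF k(1)] by (metis DiffI)
  qed (use y in blast)
  then have "mult (moves G xs) ` hes G = mult G ` hes G"
    using moves_mult_mem[OF F assms(3)] moves_mult_outside[OF F assms(3)]
    by (auto, metis DiffE image_eqI)
  then show ?thesis by (simp add: mbar_def)
qed

text \<open>The covering with the modulus kept as a parameter: after the moves, the covering is
  formed with \<open>mbar\<close> of the moved graph, which only later turns out to be \<open>mbar G\<close>.\<close>

definition cover :: "nat \<Rightarrow> 'a brauer \<Rightarrow> ('a \<Rightarrow> int) \<Rightarrow> ('a \<times> int) brauer" where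
  "cover M G d =
     \<lparr>hes = hes G \<times> {0..<int M}, inv = (\<lambda>(h, i). (inv G h, i)),
      perm = (\<lambda>(h, i). (perm G h, (i + d h) mod int M)), mult = (\<lambda>_. 1)\<rparr>"

lemma covering_eq_cover: "covering G d = cover (mbar G) G d"
  by (simp add: covering_def cover_def)

lemma cover_simps [simp]:
  "hes (cover M G d) = hes G \<times> {0..<int M}"
  "inv (cover M G d) (h, i) = (inv G h, i)"
  "perm (cover M G d) (h, i) = (perm G h, (i + d h) mod int M)"
  "mult (cover M G d) x = 1"
  by (simp_all add: cover_def)

lemma funpow_cover:
  "0 \<le> j \<Longrightarrow> j < int M \<Longrightarrow>
    (perm (cover M G d) ^^ i) (h, j) =
      ((perm G ^^ i) h, (j + (\<Sum>l<i. d ((perm G ^^ l) h))) mod int M)"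
  by (induction i) (simp_all add: mod_add_left_eq add.assoc)

lemma mod_add_diff_cancel: "0 \<le> j \<Longrightarrow> j < m \<Longrightarrow> ((j - x) mod m + x) mod m = (j :: int)"
  by (simp add: mod_add_left_eq)

lemma (in brauer_skeleton) cover_skeleton:
  assumes M: "M > 0"
  shows "brauer_skeleton (cover M G d)"
proof
  let ?g = "\<lambda>(h, j). (perm_inv G h, (j - d (perm_inv G h)) mod int M)"
  show "bij_betw (perm (cover M G d)) (hes (cover M G d)) (hes (cover M G d))"
  proof (rule bij_betw_byWitness[where f' = ?g])
    show "\<forall>x\<in>hes (cover M G d). ?g (perm (cover M G d) x) = x"
      by (auto simp: perm_inv_eqI perm_hes mod_diff_left_eq)
    show "\<forall>x\<in>hes (cover M G d). perm (cover M G d) (?g x) = x"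
      by (auto simp: perm_perm_inv mod_add_diff_cancel)
    show "perm (cover M G d) ` hes (cover M G d) \<subseteq> hes (cover M G d)"
      using M by (auto simp: perm_hes)
    show "?g ` hes (cover M G d) \<subseteq> hes (cover M G d)"
      using M by (auto simp: perm_inv_hes)
  qed
qed (auto simp: inv_hes inv_inv)

lemma (in brauer_skeleton) perm_inv_cover:
  assumes "M > 0" and "h \<in> hes G" and "0 \<le> j" "j < int M"
  shows "perm_inv (cover M G d) (h, j) = (perm_inv G h, (j - d (perm_inv G h)) mod int M)"
  using assms brauer_skeleton.perm_inv_eqI[OF cover_skeleton]
  by (simp add: perm_inv_hes perm_perm_inv mod_add_diff_cancel)

definition sector_degree :: "'a brauer \<Rightarrow> ('a \<Rightarrow> int) \<Rightarrow> 'a \<times> nat \<Rightarrow> int" where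
  "sector_degree G d k = (\<Sum>i\<le>snd k. d ((perm G ^^ i) (fst k)))"

context
  fixes j :: int and M :: nat
  assumes j: "0 \<le> j" "j < int M"
begin

lemma sector_exit_cover:
  "sector_exit (cover M G d) ((h, j), r) =
    (sector_exit G (h, r), (j + sector_degree G d (h, r)) mod int M)"
  unfolding sector_exit_def sector_degree_def
  by (simp only: funpow_cover[OF j] fst_conv snd_conv lessThan_Suc_atMost)

lemma sector_mate_cover:
  "sector_mate (cover M G d) ((h, j), r) =
    (sector_mate G (h, r), (j + sector_degree G d (h, r)) mod int M)"
  by (simp add: sector_mate_def sector_exit_cover)

lemma sector_last_cover:
  "sector_last (cover M G d) ((h, j), r) =
    (sector_last G (h, r), (j + sector_degree G d (h, r) - d (sector_last G (h, r))) mod int M)"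
  by (simp add: sector_last_def sector_degree_def funpow_cover[OF j] flip: lessThan_Suc_atMost)

lemma isolated_sector_cover:
  assumes "isolated_sector G B (h, r)"
  shows "isolated_sector (cover M G d) (B \<times> {0..<int M}) ((h, j), r)"
  using assms j
  by (auto simp: isolated_sector_def sector_set_def funpow_cover sector_exit_cover
      sector_mate_cover)

end

lemma sector_mate_lift:
  assumes "M > 0" and i: "0 \<le> i" "i < int M"
  shows "sector_mate (cover M G d) ((h, (i - sector_degree G d (h, r)) mod int M), r) =
    (sector_mate G (h, r), i)"
  using assms by (simp add: sector_mate_cover mod_add_diff_cancel)

lemma sector_last_lift:
  fixes G :: "'a brauer" and d :: "'a \<Rightarrow> int" and h :: 'a and r :: nat
  assumes "M > 0" and i: "0 \<le> i" "i < int M"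
  defines "j \<equiv> (i - sector_degree G d (h, r) + d (sector_last G (h, r))) mod int M"
  shows "sector_last (cover M G d) ((h, j), r) = (sector_last G (h, r), i)"
    and "sector_mate (cover M G d) ((h, j), r) =
      (sector_mate G (h, r), (i + d (sector_last G (h, r))) mod int M)"
proof -
  let ?S0 = "sector_degree G d (h, r)" and ?dl = "d (sector_last G (h, r))"
  have j: "0 \<le> j" "j < int M" using assms(1) by (simp_all add: j_def)
  have "(j + ?S0 - ?dl) mod int M = (j + (?S0 - ?dl)) mod int M" by (simp add: algebra_simps)
  also have "\<dots> = i" using i unfolding j_def by (simp add: mod_add_left_eq)
  finally show "sector_last (cover M G d) ((h, j), r) = (sector_last G (h, r), i)"
    by (simp add: sector_last_cover[OF j])
  have "(j + ?S0) mod int M = (i + ?dl) mod int M"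
    unfolding j_def by (simp add: mod_add_left_eq)
  then show "sector_mate (cover M G d) ((h, j), r) = (sector_mate G (h, r), (i + ?dl) mod int M)"
    by (simp add: sector_mate_cover[OF j])
qed

definition sector_lifts :: "nat \<Rightarrow> 'a \<times> nat \<Rightarrow> (('a \<times> int) \<times> nat) list" where
  "sector_lifts M k = map (\<lambda>j. ((fst k, j), snd k)) [0..int M - 1]"

lemma set_sector_lifts: "set (sector_lifts M k) = {((fst k, j), snd k) | j. 0 \<le> j \<and> j < int M}"
  by (auto simp: sector_lifts_def)

lemma distinct_sector_lifts: "distinct (sector_lifts M k)"
  by (simp add: sector_lifts_def distinct_map inj_on_def)

lemma (in brauer_skeleton) isolated_family_lifts:
  assumes "M > 0" and "isolated_sector G B k"
  shows "isolated_family (cover M G d) (B \<times> {0..<int M}) (set (sector_lifts M k))"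
proof -
  interpret C: brauer_skeleton "cover M G d" using cover_skeleton[OF assms(1)] .
  show ?thesis
  proof
    fix l assume "l \<in> set (sector_lifts M k)"
    then obtain j where "l = ((fst k, j), snd k)" "0 \<le> j" "j < int M"
      by (auto simp: set_sector_lifts)
    then show "isolated_sector (cover M G d) (B \<times> {0..<int M}) l"
      using isolated_sector_cover[of j M G B "fst k" "snd k" d] assms(2) by simp
  qed
qed

lemma moves_mult_one: "(\<And>x. mult G x = 1) \<Longrightarrow> mult (moves G ys) x = 1"
  by (induction G ys rule: moves.induct) (simp_all add: mult_move)

context brauer_skeleton
begin

context
  fixes B h r
  assumes isolated: "isolated_sector G B (h, r)"
begin

interpretation single: isolated_family G B "{(h, r)}"
  using isolated by unfold_locales simp

lemma mate_ne_last: "sector_mate G (h, r) \<noteq> sector_last G (h, r)"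
  using single.mate_notin single.last_mem by force

lemma perm_eq_exit_iff: "z \<in> hes G \<Longrightarrow> perm G z = sector_exit G (h, r) \<longleftrightarrow> z = sector_last G (h, r)"
  using perm_eq_iff single.last_hes by (force simp flip: perm_sector_last)

lemma perm_eq_start_iff: "z \<in> hes G \<Longrightarrow> perm G z = h \<longleftrightarrow> z = perm_inv G h"
  using single.start_hes perm_perm_inv perm_inv_eqI by force

lemma perm_move_isolated:
  assumes y: "y \<in> hes G"
  shows "perm (move G h r) y =
    (if y = sector_mate G (h, r) then h
     else let z = perm G (if y = sector_last G (h, r) then sector_mate G (h, r) else y)
          in if z = h then sector_exit G (h, r) else z)"
  using y mate_ne_last perm_eq_exit_iff[OF y] perm_eq_exit_iff[OF single.mate_hes]
  by (auto simp: perm_move perm_sector_last transpose_def Let_def)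

text \<open>The case \<open>\<iota> \<sigma>\<^sup>r\<^sup>+\<^sup>1 h = \<sigma>\<^sup>-\<^sup>1 h\<close> of the definition becomes the test \<open>perm G z = h\<close>.\<close>

lemma move_grading_isolated:
  assumes y: "y \<in> hes G"
  shows "move_grading G d h r y =
    (if y = sector_mate G (h, r) then - sector_degree G d (h, r)
     else let z = if y = sector_last G (h, r) then sector_mate G (h, r) else y
          in (if y = sector_last G (h, r) then d y else 0) + d z
             + (if perm G z = h then sector_degree G d (h, r) else 0))"
  using y mate_ne_last perm_eq_start_iff[OF y] perm_eq_start_iff[OF single.mate_hes]
  unfolding move_grading_def sector_degree_def
  by (auto simp: Let_def sector_mate_def sector_exit_def sector_last_def)

context
  fixes M :: nat and d :: "'a \<Rightarrow> int"
  assumes M: "M > 0"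
begin

interpretation lifts: isolated_family "cover M G d" "B \<times> {0..<int M}" "set (sector_lifts M (h, r))"
  using isolated_family_lifts[OF M isolated] .

lemma sector_jump_lifts:
  assumes "0 \<le> j" "j < int M"
  shows "sector_jump (cover M G d) (set (sector_lifts M (h, r))) (z, j) =
    (if z = h then (sector_exit G (h, r), (j + sector_degree G d (h, r)) mod int M) else (z, j))"
proof (cases "z = h")
  case True
  then show ?thesis
    using lifts.sector_jump_start[of "((h, j), r)"] assms
    by (simp add: set_sector_lifts sector_exit_cover)
next
  case False
  then show ?thesis by (auto simp: set_sector_lifts intro: sector_jump_other)
qed

lemma kauer_perm_lifts:
  assumes y: "y \<in> hes G" and i: "0 \<le> i" "i < int M"
  shows "kauer_perm (cover M G d) (set (sector_lifts M (h, r))) (y, i) =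
    (if y = sector_mate G (h, r) then (h, (i - sector_degree G d (h, r)) mod int M)
     else sector_jump (cover M G d) (set (sector_lifts M (h, r)))
       (perm (cover M G d) (if y = sector_last G (h, r)
          then (sector_mate G (h, r), (i + d y) mod int M) else (y, i))))"
proof -
  let ?S0 = "sector_degree G d (h, r)"
  consider "y = sector_mate G (h, r)" | "y = sector_last G (h, r)"
    | "y \<noteq> sector_mate G (h, r)" "y \<noteq> sector_last G (h, r)"
    by blast
  then show ?thesis
  proof cases
    case 1
    then show ?thesis
      using sector_mate_lift[OF M i, of G d h r] M
        lifts.kauer_perm_mate[of "((h, (i - ?S0) mod int M), r)"] by (simp add: set_sector_lifts)
  next
    case 2
    then show ?thesis
      using sector_last_lift[OF M i, of G d h r] mate_ne_last M
        lifts.kauer_perm_last[of "((h, (i - ?S0 + d y) mod int M), r)"]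
      by (simp add: set_sector_lifts)
  next
    case 3
    have "kauer_perm (cover M G d) (set (sector_lifts M (h, r))) (y, i) =
        sector_jump (cover M G d) (set (sector_lifts M (h, r))) (perm (cover M G d) (y, i))"
      using 3 by (intro kauer_perm_other)
        (auto simp: set_sector_lifts sector_mate_cover sector_last_cover)
    then show ?thesis using 3 by simp
  qed
qed

lemma kauer_perm_lifts_move:
  assumes y: "y \<in> hes G" and i: "0 \<le> i" "i < int M"
  shows "kauer_perm (cover M G d) (set (sector_lifts M (h, r))) (y, i) =
    (perm (move G h r) y, (i + move_grading G d h r y) mod int M)"
proof (cases "y = sector_mate G (h, r)")
  case True
  then show ?thesis
    unfolding kauer_perm_lifts[OF y i] perm_move_isolated[OF y] move_grading_isolated[OF y]
    by simp
next
  case False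
  define z where "z = (if y = sector_last G (h, r) then sector_mate G (h, r) else y)"
  define c where "c = (if y = sector_last G (h, r) then d y else 0)"
  have "(if y = sector_last G (h, r) then (sector_mate G (h, r), (i + d y) mod int M) else (y, i)) =
      (z, (i + c) mod int M)"
    using i by (simp add: z_def c_def)
  then have "kauer_perm (cover M G d) (set (sector_lifts M (h, r))) (y, i) =
      sector_jump (cover M G d) (set (sector_lifts M (h, r))) (perm G z, (i + c + d z) mod int M)"
    using False by (simp add: kauer_perm_lifts[OF y i] mod_add_left_eq)
  also have "\<dots> = (if perm G z = h
      then (sector_exit G (h, r), (i + c + d z + sector_degree G d (h, r)) mod int M)
      else (perm G z, (i + c + d z) mod int M))"
    using M by (simp add: sector_jump_lifts mod_add_left_eq)
  also have "\<dots> = (perm (move G h r) y, (i + move_grading G d h r y) mod int M)"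
    using False
    by (simp add: perm_move_isolated[OF y] move_grading_isolated[OF y] z_def c_def Let_def ac_simps)
  finally show ?thesis .
qed

lemma cover_move_eq_moves_lifts:
  "brauer_eq (cover M (move G h r) (move_grading G d h r))
    (moves (cover M G d) (sector_lifts M (h, r)))"
  unfolding brauer_eq_def
  using moves_kauer_perm[OF lifts.isolated_family_axioms distinct_sector_lifts]
  by (auto simp: kauer_perm_lifts_move moves_mult_one)

end

end

end

lemma brauer_eq_refl: "brauer_eq G G"
  by (simp add: brauer_eq_def)

lemma brauer_eq_trans [trans]: "brauer_eq G1 G2 \<Longrightarrow> brauer_eq G2 G3 \<Longrightarrow> brauer_eq G1 G3"
  by (simp add: brauer_eq_def)

lemma (in brauer_skeleton) move_skeleton:
  assumes h: "h \<in> hes G"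
  shows "brauer_skeleton (move G h r)"
proof
  have "bij_betw (transpose h (sector_exit G (h, r)) \<circ> perm G \<circ>
      transpose (sector_last G (h, r)) (sector_mate G (h, r))) (hes G) (hes G)"
    using h sector_exit_hes sector_last_hes sector_mate_hes
    by (intro bij_betw_trans[OF _ bij_betw_trans[OF perm_bij]]) simp_all
  then show "bij_betw (perm (move G h r)) (hes (move G h r)) (hes (move G h r))"
    by (simp add: perm_move)
qed (simp_all add: inv_hes inv_inv)

lemma moves_skeleton:
  "brauer_skeleton G \<Longrightarrow> \<forall>k\<in>set ys. fst k \<in> hes G \<Longrightarrow> brauer_skeleton (moves G ys)"
  by (induction G ys rule: moves.induct) (simp add: brauer_skeleton.move_skeleton)+

lemma move_cong:
  assumes eq: "brauer_eq G1 G2" and "brauer_skeleton G1" and h: "h \<in> hes G1"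
  shows "brauer_eq (move G1 h r) (move G2 h r)"
proof -
  interpret brauer_skeleton G1 by fact
  have agree: "perm G2 x = perm G1 x" "inv G2 x = inv G1 x" "mult G2 x = mult G1 x"
    if "x \<in> hes G1" for x
    using eq that by (simp_all add: brauer_eq_def)
  have pow: "(perm G2 ^^ i) h = (perm G1 ^^ i) h" for i
    by (induction i) (simp_all add: agree funpow_hes h)
  have sector: "sector_set G2 (h, r) = sector_set G1 (h, r)"
    "sector_last G2 (h, r) = sector_last G1 (h, r)" "sector_exit G2 (h, r) = sector_exit G1 (h, r)"
    "sector_mate G2 (h, r) = sector_mate G1 (h, r)"
    using agree(2)[OF sector_exit_hes[of "(h, r)"]] h
    by (simp_all add: sector_set_def sector_last_def sector_exit_def sector_mate_def pow
        del: funpow.simps)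
  have "transpose (sector_last G1 (h, r)) (sector_mate G1 (h, r)) x \<in> hes G1" if "x \<in> hes G1" for x
    using that h sector_last_hes sector_mate_hes by (simp add: transpose_def)
  then show ?thesis
    using eq h sector_mate_hes[of "(h, r)"]
    by (auto simp: brauer_eq_def perm_move mult_move sector agree)
qed

lemma moves_cong:
  "brauer_eq G1 G2 \<Longrightarrow> brauer_skeleton G1 \<Longrightarrow> \<forall>k\<in>set ys. fst k \<in> hes G1 \<Longrightarrow>
    brauer_eq (moves G1 ys) (moves G2 ys)"
proof (induction G1 ys arbitrary: G2 rule: moves.induct)
  case (2 G1 h r ys)
  then show ?case by (simp add: move_cong brauer_skeleton.move_skeleton)
qed simp

lemma fst_gmoves: "fst (gmoves Gd xs) = moves (fst Gd) xs"
  by (induction Gd xs rule: gmoves.induct) (auto simp: gmove_def)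

lemma gmoves_snoc: "gmoves Gd (xs @ [k]) = gmove (gmoves Gd xs) k"
  by (induction Gd xs rule: gmoves.induct) auto

lemma cover_gmoves_eq_moves_lifts:
  assumes "isolated_family G B (set xs)" and "distinct xs" and M: "M > 0"
  shows "brauer_eq (cover M (fst (gmoves (G, d) xs)) (snd (gmoves (G, d) xs)))
           (moves (cover M G d) (concat (map (sector_lifts M) xs)))"
  using assms(1,2)
proof (induction xs rule: rev_induct)
  case Nil
  then show ?case by (simp add: brauer_eq_refl)
next
  case (snoc k xs)
  interpret isolated_family G B "set (xs @ [k])" by fact
  obtain h r where k: "k = (h, r)" by fastforce
  define Gk dk where "Gk = moves G xs" and "dk = snd (gmoves (G, d) xs)"
  have "brauer_skeleton Gk"
    unfolding Gk_def using moves_skeleton[OF brauer_skeleton_axioms] start_hes by auto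
  have IH: "brauer_eq (cover M Gk dk) (moves (cover M G d) (concat (map (sector_lifts M) xs)))"
    using snoc.IH[OF subfamily] snoc.prems(2) by (auto simp: Gk_def dk_def fst_gmoves)
  have "brauer_eq (cover M (move Gk h r) (move_grading Gk dk h r))
      (moves (cover M Gk dk) (sector_lifts M (h, r)))"
    using brauer_skeleton.cover_move_eq_moves_lifts[OF \<open>brauer_skeleton Gk\<close>
        isolated_sector_moves[OF snoc.prems, unfolded k, folded Gk_def] M] .
  also have "brauer_eq (moves (cover M Gk dk) (sector_lifts M (h, r)))
      (moves (moves (cover M G d) (concat (map (sector_lifts M) xs))) (sector_lifts M (h, r)))"
    using moves_cong[OF IH brauer_skeleton.cover_skeleton[OF \<open>brauer_skeleton Gk\<close> M]]
      start_hes[of k] by (simp add: set_sector_lifts Gk_def k)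
  finally show ?case
    by (simp add: gmoves_snoc gmove_def fst_gmoves Gk_def dk_def k moves_append)
qed

lemma (in brauer_skeleton) isolated_family_max_sectors:
  assumes "iota_stable G H'"
  shows "isolated_family G H' (max_sectors G H')"
proof
  fix k assume "k \<in> max_sectors G H'"
  then obtain h r where k: "k = (h, r)" and h: "h \<in> hes G"
    and sector: "\<forall>i\<le>r. (perm G ^^ i) h \<in> H'" and exit: "(perm G ^^ Suc r) h \<notin> H'"
    and pred: "perm_inv G h \<notin> H'"
    by (auto simp: max_sectors_def max_sector_def is_sector_def)
  have "sector_mate G (h, r) \<notin> H'"
    using assms exit inv_inv[OF sector_exit_hes[of "(h, r)"]] h
    by (auto simp: iota_stable_def sector_mate_def sector_exit_def)
  then show "isolated_sector G H' k"
    using h sector exit pred perm_inv_eqI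
    by (auto simp: isolated_sector_def k sector_set_def sector_exit_def)
qed

lemma (in brauer_skeleton) max_sectors_cover:
  assumes M: "M > 0"
  shows "max_sectors (cover M G d) (H' \<times> {0..<int M}) =
    (\<Union>k\<in>max_sectors G H'. set (sector_lifts M k))"
proof (rule set_eqI)
  fix l :: "('a \<times> int) \<times> nat"
  obtain h j r where l: "l = ((h, j), r)" by (metis prod.collapse)
  show "l \<in> max_sectors (cover M G d) (H' \<times> {0..<int M}) \<longleftrightarrow>
      l \<in> (\<Union>k\<in>max_sectors G H'. set (sector_lifts M k))"
  proof (cases "h \<in> hes G \<and> 0 \<le> j \<and> j < int M")
    case True
    then show ?thesis
      using M by (auto simp: l max_sectors_def max_sector_def is_sector_def set_sector_lifts
          funpow_cover perm_inv_cover simp del: funpow.simps)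
  qed (auto simp: l max_sectors_def max_sector_def is_sector_def set_sector_lifts)
qed

lemma distinct_concat_sector_lifts: "distinct xs \<Longrightarrow> distinct (concat (map (sector_lifts M) xs))"
  by (induction xs) (auto simp: distinct_sector_lifts set_sector_lifts)

lemma moves_set_eq:
  assumes "isolated_family G B (set xs)" and "distinct xs" and "distinct ys" and "set xs = set ys"
    and "\<And>x. mult G x = 1"
  shows "brauer_eq (moves G xs) (moves G ys)"
  using assms moves_kauer_perm[of G B xs] moves_kauer_perm[of G B ys]
  by (simp add: brauer_eq_def moves_mult_one)

lemma iota_stable_cover: "iota_stable G H' \<Longrightarrow> iota_stable (cover M G d) (H' \<times> {0..<int M})"
  by (auto simp: iota_stable_def)

lemma mbar_pos:
  assumes "brauer_graph G"
  shows "mbar G > 0"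
proof -
  have "finite (mult G ` hes G)" and "0 \<notin> mult G ` hes G"
    using assms by (auto simp: brauer_graph_def)
  then show ?thesis unfolding mbar_def by (metis Lcm_0_iff_nat gr0I)
qed

theorem proposition2p19:
  fixes G :: "'a brauer" and d :: "'a \<Rightarrow> int" and H' :: "'a set"
    and xs :: "('a \<times> nat) list" and ys :: "(('a \<times> int) \<times> nat) list"
  assumes "graded_brauer_graph G d"
    and "iota_stable G H'"
    and "distinct xs" and "set xs = max_sectors G H'"
    and "distinct ys"
    and "set ys = max_sectors (covering G d) (H' \<times> {0..<int (mbar G)})"
  shows "brauer_eq (covering (fst (gmoves (G, d) xs)) (snd (gmoves (G, d) xs)))
                   (moves (covering G d) ys)"
proof -
  have G: "brauer_graph G" using assms(1) by (simp add: graded_brauer_graph_def)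
  interpret brauer_skeleton G using G by (rule brauer_graph_skeleton)
  have M: "mbar G > 0" using G by (rule mbar_pos)
  have F: "isolated_family G H' (set xs)"
    using isolated_family_max_sectors[OF assms(2)] assms(4) by simp
  have "mbar (fst (gmoves (G, d) xs)) = mbar G"
    using moves_mbar[OF G F assms(3)] by (simp add: fst_gmoves)
  then have "brauer_eq (covering (fst (gmoves (G, d) xs)) (snd (gmoves (G, d) xs)))
      (moves (cover (mbar G) G d) (concat (map (sector_lifts (mbar G)) xs)))"
    using cover_gmoves_eq_moves_lifts[OF F assms(3) M] by (simp add: covering_eq_cover)
  also have "brauer_eq \<dots> (moves (cover (mbar G) G d) ys)"
  proof (rule moves_set_eq)
    show "isolated_family (cover (mbar G) G d) (H' \<times> {0..<int (mbar G)})
        (set (concat (map (sector_lifts (mbar G)) xs)))"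
      using brauer_skeleton.isolated_family_max_sectors[OF cover_skeleton[OF M]
          iota_stable_cover[OF assms(2)]]
      by (simp add: max_sectors_cover[OF M] assms(4))
    show "set (concat (map (sector_lifts (mbar G)) xs)) = set ys"
      using assms(4,6) max_sectors_cover[OF M] by (simp add: covering_eq_cover)
  qed (simp_all add: distinct_concat_sector_lifts assms(3,5))
  finally show ?thesis by (simp only: covering_eq_cover)
qed

end
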